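(* Let $n\ge 3$. The spectral radius of the super compacted matrix $\mathsf{SC}_n$ is the largest real root of the polynomial \[ Q_n(x) = x^{n} - 2(n-1)\sum_{j=1}^{n-1} x^{j} + 1. \]
   Context: The super compacted matrix of rank $n$ is the $n\times n$ matrix $\mathsf{SC}_n=(s_{ij})$ with: $s_{ij}=1$ if ($i\le n-2$ and $j=i+1$) or $i=n$; $s_{ij}=2$ if $i=n-2$ and $j=n$; $s_{ij}=2n-3$ if $i=n-1$ and $j<n$; $s_{ij}=2n-4$ if $i=n-1$ and $j=n$; $s_{ij}=0$ otherwise. *)

theory Defs
  imports "Jordan_Normal_Form.Spectral_Radius"
begin

text \<open>Entries of the super compacted matrix SC_n, with 1-based indices i, j in 1..n.\<close>
definition sc_entry :: "nat \<Rightarrow> nat \<Rightarrow> nat \<Rightarrow> real" where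
  "sc_entry n i j =
     (if (i \<le> n - 2 \<and> j = i + 1) \<or> i = n then 1
      else if i = n - 2 \<and> j = n then 2
      else if i = n - 1 \<and> j < n then 2 * real n - 3
      else if i = n - 1 \<and> j = n then 2 * real n - 4
      else 0)"

text \<open>The super compacted matrix of rank n, as a complex n x n matrix
  (JNF matrices are 0-indexed, hence the shift by one).\<close>
definition SC :: "nat \<Rightarrow> complex mat" where
  "SC n = mat n n (\<lambda>(i, j). complex_of_real (sc_entry n (i + 1) (j + 1)))"

definition Q :: "nat \<Rightarrow> real \<Rightarrow> real" where
  "Q n x = x ^ n - 2 * (real n - 1) * (\<Sum>j = 1..n - 1. x ^ j) + 1"

end

theory Submission
  imports Defs
begin

text \<open>
  For a root x of Q_n, the vector with components (x + 1) x^k for 0 \<le> k \<le> n - 3, followed by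
  (x + 1) x^(n-2) - 2 G and G, where G = 1 + x + ... + x^(n-2), is an eigenvector of SC_n with
  eigenvalue x: all rows except the (n-1)-st hold for every x, and that row is equivalent to
  Q_n(x) = 0. Since (x - 1) Q_n(x) = x^n (x - 2n + 1) + (2n - 1) x - 1, Q_n changes sign on
  [2n - 3, 2n - 1], so it has a root \<rho> > 2n - 3, and for such \<rho> the eigenvector is positive.
  A nonnegative matrix with a positive eigenvector has the corresponding eigenvalue as its
  spectral radius, so \<rho> is the spectral radius, and it dominates every positive root of Q_n
  because those are eigenvalues as well.
\<close>

lemma eigenvalue_norm_le_positive_eigenvector:
  fixes A :: "real mat" and u :: "real vec"
  assumes A: "A \<in> carrier_mat n n"
    and A_nonneg: "\<And>i j. i < n \<Longrightarrow> j < n \<Longrightarrow> A $$ (i, j) \<ge> 0"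
    and u: "u \<in> carrier_vec n" "\<And>i. i < n \<Longrightarrow> u $ i > 0"
    and Au: "A *\<^sub>v u = \<rho> \<cdot>\<^sub>v u"
    and ev: "eigenvalue (map_mat complex_of_real A) \<mu>"
  shows "norm \<mu> \<le> \<rho>"
proof -
  obtain w where w: "w \<in> carrier_vec n" "w \<noteq> 0\<^sub>v n"
      and Aw: "map_mat complex_of_real A *\<^sub>v w = \<mu> \<cdot>\<^sub>v w"
    using ev A unfolding eigenvalue_def eigenvector_def by auto
  obtain i0 where i0: "i0 < n" "w $ i0 \<noteq> 0"
    using w by (metis eq_vecI carrier_vecD index_zero_vec)
  define ratio where "ratio i = norm (w $ i) / u $ i" for i
  have "finite (ratio ` {..<n})" "ratio ` {..<n} \<noteq> {}" using i0(1) by auto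
  then obtain k where k: "k < n" and k_max: "ratio k = Max (ratio ` {..<n})"
    by (metis Max_in imageE lessThan_iff)
  have ratio_max: "ratio j \<le> ratio k" if "j < n" for j
    using that k_max \<open>finite (ratio ` {..<n})\<close> by simp
  define c where "c = ratio k"
  have "ratio i0 > 0" using i0 u(2)[OF i0(1)] by (simp add: ratio_def)
  hence "c > 0" using ratio_max[OF i0(1)] by (simp add: c_def)
  have w_le: "norm (w $ j) \<le> c * u $ j" if "j < n" for j
    using ratio_max[OF that] u(2)[OF that] by (simp add: c_def ratio_def pos_divide_le_eq)
  have wk: "norm (w $ k) = c * u $ k" using u(2)[OF k] by (simp add: c_def ratio_def)
  have "norm \<mu> * norm (w $ k) = norm (\<Sum>j<n. complex_of_real (A $$ (k, j)) * w $ j)"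
    using arg_cong[OF Aw, of "\<lambda>v. v $ k"] A w(1) k
    by (simp add: norm_mult scalar_prod_def atLeast0LessThan)
  also have "\<dots> \<le> (\<Sum>j<n. A $$ (k, j) * norm (w $ j))"
    using norm_sum[of "\<lambda>j. complex_of_real (A $$ (k, j)) * w $ j" "{..<n}"] A_nonneg[OF k]
    by (simp add: norm_mult)
  also have "\<dots> \<le> (\<Sum>j<n. A $$ (k, j) * (c * u $ j))"
    by (intro sum_mono mult_left_mono w_le A_nonneg[OF k]) auto
  also have "\<dots> = c * (A *\<^sub>v u) $ k"
    using A u(1) k by (simp add: scalar_prod_def atLeast0LessThan sum_distrib_left ac_simps)
  also have "\<dots> = \<rho> * norm (w $ k)" using Au u(1) k wk by simp
  finally show ?thesis using \<open>c > 0\<close> u(2)[OF k] wk by (simp add: mult_le_cancel_right)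
qed

lemma spectral_radius_positive_eigenvector:
  fixes A :: "real mat" and u :: "real vec"
  assumes A: "A \<in> carrier_mat n n" and "n > 0"
    and A_nonneg: "\<And>i j. i < n \<Longrightarrow> j < n \<Longrightarrow> A $$ (i, j) \<ge> 0"
    and u: "u \<in> carrier_vec n" "\<And>i. i < n \<Longrightarrow> u $ i > 0"
    and Au: "A *\<^sub>v u = \<rho> \<cdot>\<^sub>v u"
  shows "spectral_radius (map_mat complex_of_real A) = \<rho>"
proof -
  have A': "map_mat complex_of_real A \<in> carrier_mat n n" using A by simp
  have "u \<noteq> 0\<^sub>v n" using u \<open>n > 0\<close> by (metis index_zero_vec(1) less_irrefl)
  hence "eigenvalue A \<rho>" using A u(1) Au unfolding eigenvalue_def eigenvector_def by auto
  hence "eigenvalue (map_mat complex_of_real A) (complex_of_real \<rho>)"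
    by (rule of_real_hom.eigenvalue_hom[OF A])
  hence "norm (complex_of_real \<rho>) \<le> spectral_radius (map_mat complex_of_real A)"
    by (intro spectral_radius_mem_max(2)[OF A' \<open>n > 0\<close>] imageI) (simp add: spectrum_def)
  moreover obtain \<mu> where "eigenvalue (map_mat complex_of_real A) \<mu>"
      and "spectral_radius (map_mat complex_of_real A) = norm \<mu>"
    using spectral_radius_mem_max(1)[OF A' \<open>n > 0\<close>] by (auto simp: spectrum_def)
  ultimately show ?thesis
    using eigenvalue_norm_le_positive_eigenvector[OF A A_nonneg u Au] by fastforce
qed

definition sc_mat :: "nat \<Rightarrow> real mat" where
  "sc_mat n = mat n n (\<lambda>(i, j). sc_entry n (i + 1) (j + 1))"

lemma SC_eq_map_sc_mat: "SC n = map_mat complex_of_real (sc_mat n)"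
  unfolding SC_def sc_mat_def by auto

lemma sc_mat_carrier: "sc_mat n \<in> carrier_mat n n"
  unfolding sc_mat_def by simp

lemma sc_mat_nonneg: "sc_mat n $$ (i, j) \<ge> 0" if "i < n" "j < n"
  using that unfolding sc_mat_def sc_entry_def by auto

lemma sc_mat_mult_vec_nth:
  fixes v :: "real vec"
  assumes v: "v \<in> carrier_vec (m + 3)" and i: "i < m + 3"
  shows "(sc_mat (m + 3) *\<^sub>v v) $ i =
    (if i < m then v $ (i + 1)
     else if i = m then v $ (m + 1) + 2 * v $ (m + 2)
     else if i = m + 1 then (2 * real m + 3) * (\<Sum>j<m + 2. v $ j) + (2 * real m + 2) * v $ (m + 2)
     else (\<Sum>j<m + 3. v $ j))"
proof -
  let ?a = "\<lambda>j. sc_entry (m + 3) (i + 1) (j + 1)"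
  have row: "(sc_mat (m + 3) *\<^sub>v v) $ i = (\<Sum>j<m + 3. ?a j * v $ j)"
    using v i by (simp add: sc_mat_def scalar_prod_def atLeast0LessThan)
  have split_last: "(\<Sum>j<m + 3. f j) = (\<Sum>j<m + 2. f j) + f (m + 2)" for f :: "nat \<Rightarrow> real"
    by (simp add: numeral_3_eq_3)
  consider "i < m" | "i = m" | "i = m + 1" | "i = m + 2" using i by linarith
  then show ?thesis
  proof cases
    case 1
    have "(\<Sum>j<m + 3. ?a j * v $ j) = (\<Sum>j<m + 3. if j = i + 1 then v $ j else 0)"
      using 1 by (intro sum.cong) (auto simp: sc_entry_def)
    then show ?thesis unfolding row using 1 by simp
  next
    case 2
    have "(\<Sum>j<m + 3. ?a j * v $ j)
        = (\<Sum>j<m + 3. (if j = m + 1 then v $ j else 0) + (if j = m + 2 then 2 * v $ j else 0))"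
      using 2 by (intro sum.cong) (auto simp: sc_entry_def)
    then show ?thesis unfolding row using 2 by (simp add: sum.distrib)
  next
    case 3
    have "(\<Sum>j<m + 3. ?a j * v $ j)
        = (\<Sum>j<m + 3. if j < m + 2 then (2 * real m + 3) * v $ j else (2 * real m + 2) * v $ j)"
      using 3 by (intro sum.cong) (auto simp: sc_entry_def)
    then show ?thesis unfolding row split_last using 3
      by (simp add: sum_distrib_left del: sum.lessThan_Suc)
  next
    case 4
    have "(\<Sum>j<m + 3. ?a j * v $ j) = (\<Sum>j<m + 3. v $ j)"
      using 4 by (intro sum.cong) (auto simp: sc_entry_def)
    then show ?thesis unfolding row using 4 by simp
  qed
qed

lemma Q_eq_geometric_sum:
  "Q (m + 3) x = x ^ (m + 3) - 2 * (real m + 2) * x * (\<Sum>j<m + 2. x ^ j) + 1"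
proof -
  have "(\<Sum>j = 1..m + 2. x ^ j) = x * (\<Sum>j<m + 2. x ^ j)"
    by (simp only: One_nat_def sum.atLeast1_atMost_eq sum_distrib_left power_Suc)
  then show ?thesis by (simp add: Q_def)
qed

lemma Q_times_x_minus_one:
  "(x - 1) * Q (m + 3) x = x ^ (m + 3) * (x - (2 * real m + 5)) + (2 * real m + 5) * x - 1"
proof -
  have geom: "(x - 1) * (\<Sum>j<m + 2. x ^ j) = x ^ (m + 2) - 1"
    by (rule power_diff_1_eq[symmetric])
  have "(x - 1) * Q (m + 3) x
      = (x - 1) * x ^ (m + 3) - 2 * (real m + 2) * x * ((x - 1) * (\<Sum>j<m + 2. x ^ j)) + (x - 1)"
    unfolding Q_eq_geometric_sum by (simp add: algebra_simps)
  also have "\<dots> = x ^ (m + 3) * (x - (2 * real m + 5)) + (2 * real m + 5) * x - 1"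
    unfolding geom by (simp add: algebra_simps numeral_3_eq_3)
  finally show ?thesis .
qed

lemma Q_root_above:
  obtains \<rho> where "\<rho> > 2 * real m + 3" "Q (m + 3) \<rho> = 0"
proof -
  define d where "d = 2 * real m + 3"
  have "d \<ge> 3" by (simp add: d_def)
  have "d ^ 2 * 1 \<le> d ^ 2 * d ^ (m + 1)"
    using \<open>d \<ge> 3\<close> by (intro mult_left_mono one_le_power) auto
  hence "(d - 1) * Q (m + 3) d \<le> - ((d - 1) ^ 2)"
    unfolding Q_times_x_minus_one d_def
    by (simp add: algebra_simps power2_eq_square numeral_3_eq_3)
  also have "\<dots> < 0" using \<open>d \<ge> 3\<close> by simp
  finally have Q_low: "Q (m + 3) d < 0" using \<open>d \<ge> 3\<close> by (simp add: mult_less_0_iff)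
  have "(d + 1) * Q (m + 3) (d + 2) = (d + 2) ^ 2 - 1"
    using Q_times_x_minus_one[of "d + 2" m] by (simp add: d_def algebra_simps power2_eq_square)
  also have "\<dots> = (d + 1) * (d + 3)" by (simp add: algebra_simps power2_eq_square)
  also have "\<dots> > 0" using \<open>d \<ge> 3\<close> by simp
  finally have Q_high: "Q (m + 3) (d + 2) > 0" using \<open>d \<ge> 3\<close> by (simp add: zero_less_mult_iff)
  have "continuous_on {d..d + 2} (Q (m + 3))"
    unfolding Q_def by (intro continuous_intros)
  then obtain \<rho> where "d \<le> \<rho>" "\<rho> \<le> d + 2" "Q (m + 3) \<rho> = 0"
    using IVT'[of "Q (m + 3)" d 0 "d + 2"] Q_low Q_high by auto
  moreover have "\<rho> \<noteq> d" using Q_low \<open>Q (m + 3) \<rho> = 0\<close> by auto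
  ultimately show ?thesis using that d_def by force
qed

definition sc_eigvec :: "nat \<Rightarrow> real \<Rightarrow> real vec" where
  "sc_eigvec m x = vec (m + 3) (\<lambda>k.
     if k \<le> m then (x + 1) * x ^ k
     else if k = m + 1 then (x + 1) * x ^ (m + 1) - 2 * (\<Sum>j<m + 2. x ^ j)
     else (\<Sum>j<m + 2. x ^ j))"

lemma sc_eigvec_carrier: "sc_eigvec m x \<in> carrier_vec (m + 3)"
  unfolding sc_eigvec_def by simp

lemma sum_sc_eigvec: "(\<Sum>j<m + 2. sc_eigvec m x $ j) = (x - 1) * (\<Sum>j<m + 2. x ^ j)"
proof -
  have "(\<Sum>j<m + 2. sc_eigvec m x $ j)
      = (x + 1) * (\<Sum>j<m + 1. x ^ j) + ((x + 1) * x ^ (m + 1) - 2 * (\<Sum>j<m + 2. x ^ j))"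
    by (simp add: sc_eigvec_def sum_distrib_left distrib_left)
  also have "\<dots> = (x - 1) * (\<Sum>j<m + 2. x ^ j)" by (simp add: algebra_simps)
  finally show ?thesis .
qed

lemma sc_mat_mult_sc_eigvec:
  assumes "Q (m + 3) x = 0"
  shows "sc_mat (m + 3) *\<^sub>v sc_eigvec m x = x \<cdot>\<^sub>v sc_eigvec m x"
proof (rule eq_vecI)
  fix i assume "i < dim_vec (x \<cdot>\<^sub>v sc_eigvec m x)"
  hence i: "i < m + 3" by (simp add: sc_eigvec_def)
  define G where "G = (\<Sum>j<m + 2. x ^ j)"
  let ?v = "sc_eigvec m x"
  have v: "?v $ k = (if k \<le> m then (x + 1) * x ^ k else if k = m + 1 then (x + 1) * x ^ (m + 1) - 2 * G else G)"
    if "k < m + 3" for k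
    using that by (simp add: sc_eigvec_def G_def)
  have "(sc_mat (m + 3) *\<^sub>v ?v) $ i = x * ?v $ i"
  proof -
    consider "i < m" | "i = m" | "i = m + 1" | "i = m + 2" using i by linarith
    then show ?thesis
    proof cases
      case 1
      then show ?thesis unfolding sc_mat_mult_vec_nth[OF sc_eigvec_carrier i] by (simp add: v)
    next
      case 2
      then show ?thesis unfolding sc_mat_mult_vec_nth[OF sc_eigvec_carrier i] by (simp add: v)
    next
      case 3
      have "(x - 1) * G = x ^ (m + 2) - 1"
        unfolding G_def by (rule power_diff_1_eq[symmetric])
      moreover have "x ^ (m + 3) - 2 * (real m + 2) * x * G + 1 = 0"
        using assms unfolding Q_eq_geometric_sum G_def .
      ultimately have "(2 * real m + 3) * ((x - 1) * G) + (2 * real m + 2) * G = x * ((x + 1) * x ^ (m + 1) - 2 * G)"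
        by (simp add: algebra_simps numeral_3_eq_3)
      then show ?thesis unfolding sc_mat_mult_vec_nth[OF sc_eigvec_carrier i] sum_sc_eigvec
        using 3 by (simp add: v G_def)
    next
      case 4
      have "(\<Sum>j<m + 3. ?v $ j) = (\<Sum>j<m + 2. ?v $ j) + ?v $ (m + 2)"
        using sum.lessThan_Suc[of "\<lambda>j. ?v $ j" "m + 2"] by (simp add: numeral_3_eq_3)
      also have "\<dots> = (x - 1) * G + G" unfolding sum_sc_eigvec by (simp add: v G_def)
      finally have "(\<Sum>j<m + 3. ?v $ j) = (x - 1) * G + G" .
      then show ?thesis unfolding sc_mat_mult_vec_nth[OF sc_eigvec_carrier i]
        using 4 by (simp add: v algebra_simps)
    qed
  qed
  then show "(sc_mat (m + 3) *\<^sub>v ?v) $ i = (x \<cdot>\<^sub>v ?v) $ i"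
    using i by (simp add: sc_eigvec_def)
qed (simp add: sc_mat_def sc_eigvec_def)

lemma sc_eigvec_pos:
  assumes x: "x > 2 * real m + 3" and Qx: "Q (m + 3) x = 0" and i: "i < m + 3"
  shows "sc_eigvec m x $ i > 0"
proof -
  let ?v = "sc_eigvec m x"
  have "x > 0" using x by linarith
  have head_pos: "?v $ j > 0" if "j \<le> m" for j
    using that \<open>x > 0\<close> by (simp add: sc_eigvec_def)
  have "?v $ (m + 2) = (\<Sum>j<m + 2. x ^ j)" by (simp add: sc_eigvec_def)
  also have "\<dots> > 0" using \<open>x > 0\<close> by (intro sum_pos) auto
  finally have last_pos: "?v $ (m + 2) > 0" .
  have "(2 * real m + 3) * (\<Sum>j<m + 2. ?v $ j) + (2 * real m + 2) * ?v $ (m + 2)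
      = (sc_mat (m + 3) *\<^sub>v ?v) $ (m + 1)"
    using sc_mat_mult_vec_nth[OF sc_eigvec_carrier, of "m + 1"] by simp
  also have "\<dots> = x * ?v $ (m + 1)"
    using sc_mat_mult_sc_eigvec[OF Qx] sc_eigvec_carrier[of m x] by simp
  finally have "(2 * real m + 3) * (\<Sum>j<m + 2. ?v $ j) + (2 * real m + 2) * ?v $ (m + 2)
      = x * ?v $ (m + 1)" .
  moreover have "(\<Sum>j<m + 2. ?v $ j) = (\<Sum>j<m + 1. ?v $ j) + ?v $ (m + 1)" by simp
  ultimately have "(x - (2 * real m + 3)) * ?v $ (m + 1)
      = (2 * real m + 3) * (\<Sum>j<m + 1. ?v $ j) + (2 * real m + 2) * ?v $ (m + 2)"
    by (simp add: algebra_simps)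
  also have "\<dots> > 0"
  proof -
    have "(\<Sum>j<m + 1. ?v $ j) > 0" using head_pos by (intro sum_pos) auto
    then show ?thesis using last_pos by (intro add_pos_pos) (simp_all add: zero_less_mult_iff)
  qed
  finally have "?v $ (m + 1) > 0" using x by (simp add: zero_less_mult_iff)
  moreover consider "i \<le> m" | "i = m + 1" | "i = m + 2" using i by linarith
  ultimately show ?thesis using head_pos last_pos by cases auto
qed

lemma SC_carrier: "SC n \<in> carrier_mat n n"
  unfolding SC_def by simp

lemma eigenvalue_SC_of_Q_root:
  assumes "Q (m + 3) x = 0" and "x \<noteq> -1"
  shows "eigenvalue (SC (m + 3)) (complex_of_real x)"
proof -
  have "sc_eigvec m x $ 0 \<noteq> 0" using \<open>x \<noteq> -1\<close> by (simp add: sc_eigvec_def)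
  hence "sc_eigvec m x \<noteq> 0\<^sub>v (m + 3)" by auto
  hence "eigenvalue (sc_mat (m + 3)) x"
    using sc_mat_mult_sc_eigvec[OF assms(1)] sc_eigvec_carrier sc_mat_carrier
    unfolding eigenvalue_def eigenvector_def by (metis carrier_matD(1))
  then show ?thesis unfolding SC_eq_map_sc_mat by (rule of_real_hom.eigenvalue_hom[OF sc_mat_carrier])
qed

lemma spectral_radius_SC:
  assumes "\<rho> > 2 * real m + 3" and "Q (m + 3) \<rho> = 0"
  shows "spectral_radius (SC (m + 3)) = \<rho>"
  unfolding SC_eq_map_sc_mat
  using sc_mat_nonneg sc_eigvec_pos[OF assms]
  by (intro spectral_radius_positive_eigenvector[OF sc_mat_carrier _ _ sc_eigvec_carrier
        _ sc_mat_mult_sc_eigvec[OF assms(2)]]) auto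

theorem proposition6p3:
  fixes n :: nat
  assumes "n \<ge> 3"
  shows "Q n (spectral_radius (SC n)) = 0 \<and>
         (\<forall>x::real. Q n x = 0 \<longrightarrow> x \<le> spectral_radius (SC n))"
proof -
  obtain m where n: "n = m + 3" using assms by (metis le_add_diff_inverse2)
  obtain \<rho> where \<rho>: "\<rho> > 2 * real m + 3" "Q n \<rho> = 0" using Q_root_above n by metis
  have radius: "spectral_radius (SC n) = \<rho>" using spectral_radius_SC \<rho> n by simp
  have "x \<le> \<rho>" if "Q n x = 0" for x
  proof (cases "x > 0")
    case True
    then have "complex_of_real x \<in> spectrum (SC n)"
      using eigenvalue_SC_of_Q_root[of m x] that n by (simp add: spectrum_def)
    then have "norm (complex_of_real x) \<le> spectral_radius (SC n)"
      using assms by (intro spectral_radius_mem_max(2)[OF SC_carrier] imageI) auto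
    then show ?thesis using True radius by simp
  next
    case False
    then show ?thesis using \<rho>(1) by simp
  qed
  then show ?thesis using \<rho>(2) radius by simp
qed

end
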